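(* Let $n=2$, $m=1$, $v_1(x)=x$ and $v_2(x)=2x$. Then for every $\rho<0$ there is no pricing rule $p:\mathbb{R}_{\ge0}\to\mathbb{R}$ and allocation $\mathbf{x}\in\Psi(\rho)$ such that $(\mathbf{x},p)$ is a Walrasian equilibrium.
   Context: Single good of supply 1; an allocation is $(x_1,x_2)\in\mathbb{R}^2_{\ge0}$ with $x_1+x_2\le1$. For $\rho<0$, $\Psi(\rho)$ is the set of allocations maximizing the CES welfare $(v_1(x_1)^\rho+v_2(x_2)^\rho)^{1/\rho}$. Quasilinear demand set $D_i(p)=\arg\max_{y\ge0}(v_i(y)-p(y))$. $(\mathbf{x},p)$ is a Walrasian equilibrium if $x_i\in D_i(p)$ for $i=1,2$, $x_1+x_2\le1$, and $x_1+x_2=1$ if the good has nonzero cost (some $y$ has $p(y)>0$). *)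

theory Defs
  imports "HOL-Analysis.Analysis"
begin

definition feasible :: "real \<times> real \<Rightarrow> bool" where
  "feasible x \<longleftrightarrow> fst x \<ge> 0 \<and> snd x \<ge> 0 \<and> fst x + snd x \<le> 1"

(* CES welfare for rho < 0, with the standard convention (continuous extension)
   that the welfare is 0 whenever some agent has value 0 (since 0^rho = +infinity). *)
definition ces_welfare :: "real \<Rightarrow> (real \<Rightarrow> real) \<Rightarrow> (real \<Rightarrow> real) \<Rightarrow> real \<times> real \<Rightarrow> real" where
  "ces_welfare \<rho> v1 v2 x =
     (if v1 (fst x) = 0 \<or> v2 (snd x) = 0 then 0
      else (v1 (fst x) powr \<rho> + v2 (snd x) powr \<rho>) powr (1 / \<rho>))"

definition Psi :: "real \<Rightarrow> (real \<Rightarrow> real) \<Rightarrow> (real \<Rightarrow> real) \<Rightarrow> (real \<times> real) set" where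
  "Psi \<rho> v1 v2 = {x. feasible x \<and> (\<forall>y. feasible y \<longrightarrow> ces_welfare \<rho> v1 v2 y \<le> ces_welfare \<rho> v1 v2 x)}"

definition demand :: "(real \<Rightarrow> real) \<Rightarrow> (real \<Rightarrow> real) \<Rightarrow> real set" where
  "demand v p = {y. y \<ge> 0 \<and> (\<forall>z\<ge>0. v z - p z \<le> v y - p y)}"

definition walrasian_eq :: "(real \<Rightarrow> real) \<Rightarrow> (real \<Rightarrow> real) \<Rightarrow> real \<times> real \<Rightarrow> (real \<Rightarrow> real) \<Rightarrow> bool" where
  "walrasian_eq v1 v2 x p \<longleftrightarrow>
     fst x \<in> demand v1 p \<and> snd x \<in> demand v2 p \<and> fst x + snd x \<le> 1 \<and>
     ((\<exists>y\<ge>0. p y > 0) \<longrightarrow> fst x + snd x = 1)"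

end

theory Submission
  imports Defs
begin

text \<open>In any Walrasian equilibrium the agent with the larger marginal value receives at least
as much: comparing each agent's demand with the other agent's bundle gives
\<open>v\<^sub>1(x\<^sub>2) - v\<^sub>1(x\<^sub>1) \<le> p(x\<^sub>2) - p(x\<^sub>1) \<le> v\<^sub>2(x\<^sub>2) - v\<^sub>2(x\<^sub>1)\<close>, i.e. \<open>x\<^sub>1 \<le> x\<^sub>2\<close>.
For \<open>\<rho> < 0\<close>, however, the CES objective is inequality-averse: every welfare maximizer gives
strictly more to agent 1. If \<open>0 < x\<^sub>1 < x\<^sub>2\<close>, swapping the two shares increases welfare;
if \<open>x\<^sub>1 = x\<^sub>2\<close>, moving to \<open>(1/2, 1/2)\<close> and then shifting a little of the good from
agent 2 to agent 1 does, since the derivative of \<open>s\<^sup>\<rho> + (2(1-s))\<^sup>\<rho>\<close> at \<open>s = 1/2\<close> is negative;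
and \<open>x\<^sub>1 = 0\<close> gives welfare 0.\<close>

lemma demand_linear_mono:
  fixes c1 c2 :: real
  assumes "c1 < c2" "y1 \<in> demand (\<lambda>t. c1 * t) p" "y2 \<in> demand (\<lambda>t. c2 * t) p"
  shows "y1 \<le> y2"
proof -
  have "c1 * y2 - p y2 \<le> c1 * y1 - p y1" "c2 * y1 - p y1 \<le> c2 * y2 - p y2"
    using assms(2,3) by (auto simp: demand_def)
  then have "(c2 - c1) * (y2 - y1) \<ge> 0"
    by (simp add: algebra_simps)
  with \<open>c1 < c2\<close> show ?thesis
    by (simp add: zero_le_mult_iff)
qed

lemma walrasian_eq_fst_le_snd:
  assumes "walrasian_eq (\<lambda>t. t) (\<lambda>t. 2 * t) x p"
  shows "fst x \<le> snd x"
  using demand_linear_mono[of 1 2 "fst x" p "snd x"] assms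
  by (simp add: walrasian_eq_def)

lemma ces_welfare_pos:
  assumes "v1 (fst x) > 0" "v2 (snd x) > 0"
  shows "ces_welfare \<rho> v1 v2 x > 0"
proof -
  have "v1 (fst x) powr \<rho> + v2 (snd x) powr \<rho> > 0"
    using assms by (intro add_pos_pos) auto
  with assms show ?thesis
    by (simp add: ces_welfare_def)
qed

lemma ces_welfare_less:
  assumes "\<rho> < 0"
    and "v1 (fst x) > 0" "v2 (snd x) > 0" "v1 (fst y) > 0" "v2 (snd y) > 0"
    and "v1 (fst y) powr \<rho> + v2 (snd y) powr \<rho> < v1 (fst x) powr \<rho> + v2 (snd x) powr \<rho>"
  shows "ces_welfare \<rho> v1 v2 x < ces_welfare \<rho> v1 v2 y"
proof -
  have "1 / \<rho> < 0" "v1 (fst y) powr \<rho> + v2 (snd y) powr \<rho> > 0"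
    using assms(1,4,5) by (auto intro: add_pos_pos)
  then show ?thesis
    using assms by (simp add: ces_welfare_def powr_less_mono2_neg)
qed

lemma Psi_not_less:
  assumes "x \<in> Psi \<rho> v1 v2" "feasible y"
  shows "\<not> ces_welfare \<rho> v1 v2 x < ces_welfare \<rho> v1 v2 y"
  using assms by (cases y) (simp add: Psi_def not_less)

lemma swap_powr_sum_less:
  fixes a b \<rho> :: real
  assumes "\<rho> < 0" "0 < a" "a < b"
  shows "b powr \<rho> + (2 * a) powr \<rho> < a powr \<rho> + (2 * b) powr \<rho>"
proof -
  have "0 < (a powr \<rho> - b powr \<rho>) * (1 - 2 powr \<rho>)"
    using powr_less_mono2_neg[OF assms] powr_less_mono[of \<rho> 0 2] assms(1) by simp
  then show ?thesis
    using assms(2,3) by (simp add: powr_mult algebra_simps)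
qed

lemma unequal_split_powr_sum_less:
  fixes \<rho> :: real
  assumes "\<rho> < 0"
  obtains e where "0 < e" "e < 1/2"
    "(1/2 + e) powr \<rho> + (2 * (1/2 - e)) powr \<rho> < (1/2) powr \<rho> + 1"
proof -
  define h where "h s = s powr \<rho> + 2 powr \<rho> * (1 - s) powr \<rho>" for s :: real
  have "(h has_real_derivative \<rho> * (1 - 2 powr \<rho>) * (1/2) powr (\<rho> - 1)) (at (1/2))"
    unfolding h_def by (auto intro!: derivative_eq_intros simp: algebra_simps)
  moreover have "\<rho> * (1 - 2 powr \<rho>) * (1/2) powr (\<rho> - 1) < 0"
    using assms powr_less_mono[of \<rho> 0 2] by (intro mult_neg_pos) auto
  ultimately obtain d where "d > 0" and dec: "\<And>e. 0 < e \<Longrightarrow> e < d \<Longrightarrow> h (1/2 + e) < h (1/2)"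
    using DERIV_neg_dec_right by blast
  define e where "e = min (d/2) (1/4)"
  have "0 < e" "e < d" "e < 1/2"
    using \<open>d > 0\<close> by (auto simp: e_def)
  moreover have "h (1/2) = (1/2) powr \<rho> + 1"
    by (simp add: h_def flip: powr_mult)
  moreover have "h (1/2 + e) = (1/2 + e) powr \<rho> + (2 * (1/2 - e)) powr \<rho>"
    using \<open>e < 1/2\<close> powr_mult[of 2 "1/2 - e" \<rho>] unfolding h_def by simp
  ultimately show ?thesis
    using dec[of e] that[of e] by linarith
qed

lemma Psi_snd_less_fst:
  assumes "\<rho> < 0" "x \<in> Psi \<rho> (\<lambda>t. t) (\<lambda>t. 2 * t)"
  shows "snd x < fst x"
proof (rule ccontr)
  assume "\<not> snd x < fst x"
  obtain a b where x: "x = (a, b)" and "a \<le> b"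
    using \<open>\<not> snd x < fst x\<close> by (cases x) auto
  have "0 \<le> a" "a + b \<le> 1"
    using assms(2) by (auto simp: x Psi_def feasible_def)
  note not_better = Psi_not_less[OF assms(2)[unfolded x]]
  have "a \<noteq> 0"
  proof
    assume "a = 0"
    then have "ces_welfare \<rho> (\<lambda>t. t) (\<lambda>t. 2 * t) (a, b) = 0"
      by (simp add: ces_welfare_def)
    then show False
      using not_better[of "(1/2, 1/2)"] ces_welfare_pos[of "\<lambda>t. t" "(1/2, 1/2)" "\<lambda>t. 2 * t" \<rho>]
      by (simp add: feasible_def)
  qed
  with \<open>0 \<le> a\<close> \<open>a \<le> b\<close> have "0 < a" "0 < b"
    by auto
  show False
  proof (cases "a < b")
    case True
    then show False
      using not_better[of "(b, a)"] ces_welfare_less[OF assms(1)] swap_powr_sum_less[OF assms(1) \<open>0 < a\<close> True]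
        \<open>0 < a\<close> \<open>0 < b\<close> \<open>0 \<le> a\<close> \<open>a + b \<le> 1\<close>
      by (simp add: feasible_def)
  next
    case False
    with \<open>a \<le> b\<close> \<open>a + b \<le> 1\<close> have "b = a" "a \<le> 1/2"
      by auto
    obtain e where e: "0 < e" "e < 1/2"
      and less: "(1/2 + e) powr \<rho> + (2 * (1/2 - e)) powr \<rho> < (1/2) powr \<rho> + 1"
      using unequal_split_powr_sum_less[OF assms(1)] by blast
    have "(1/2) powr \<rho> \<le> a powr \<rho>" "1 \<le> (2 * a) powr \<rho>"
      using powr_mono2'[of \<rho> a "1/2"] powr_mono2'[of \<rho> "2 * a" 1] assms(1) \<open>0 < a\<close> \<open>a \<le> 1/2\<close>
      by auto
    with less \<open>b = a\<close>
    have "(1/2 + e) powr \<rho> + (2 * (1/2 - e)) powr \<rho> < a powr \<rho> + (2 * b) powr \<rho>"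
      by simp
    then show False
      using not_better[of "(1/2 + e, 1/2 - e)"] ces_welfare_less[OF assms(1)] \<open>0 < a\<close> \<open>0 < b\<close> e
      by (simp add: feasible_def)
  qed
qed

theorem mainTheorem13:
  fixes \<rho> :: real
  assumes "\<rho> < 0"
  shows "\<not> (\<exists>(p :: real \<Rightarrow> real) x. x \<in> Psi \<rho> (\<lambda>t. t) (\<lambda>t. 2 * t) \<and>
                 walrasian_eq (\<lambda>t. t) (\<lambda>t. 2 * t) x p)"
  using Psi_snd_less_fst[OF assms] walrasian_eq_fst_le_snd by (meson not_le)

end
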